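(* Assume (A1)–(A4) hold and that the sequence $\{x_k\}$ generated by LMTR converges to a solution $x^*$ of $h(x)=0$; let $\theta\in[0,1[$ be the Łojasiewicz exponent of $\psi$ at $x^*$ and $\delta$ the Hölder order from (A1). Then: (i) for all sufficiently large $k$, $x_{k+1}=x_k+d_k$, where $d_k$ is the direction computed at the start of iteration $k$ with the current value $\lambda_k$ (i.e., $p_k=0$); (ii) there exist constants $s>0$, $\overline{s}>0$ and $k'\in\mathbb{N}$ such that, if $x_{k'}\in\mathbb{B}(x^*,s)$, then $\{x_k\}_{k\ge k'}\subset\mathbb{B}(x^*,\overline{s})$, $\psi(x_k)\to0$ and $\mathrm{dist}(x_k,\Omega)\to0$ as $k\to\infty$; (iii) if $\theta=0$, the sequences $\{\psi(x_k)\}$ and $\{\mathrm{dist}(x_k,\Omega)\}$ converge to $0$ in a finite number of steps; (iv) if $\theta\in\,]0,\frac12]$, the sequences $\{\psi(x_k)\}$ and $\{\mathrm{dist}(x_k,\Omega)\}$ converge linearly to $0$; (v) if $\theta\in\,]\frac12,1[$, there exist positive constants $\varsigma_1,\varsigma_2$ such that for all large $k$, \[ \psi(x_k)\le\varsigma_1k^{-\frac{1}{2\theta-1}}\quad\text{and}\quad\mathrm{dist}(x_k,\Omega)\le\varsigma_2k^{-\frac{\delta}{2(2\theta-1)}}. \]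
   Context: Let $h:\mathbb{R}^m\to\mathbb{R}^n$ be continuously differentiable; $\nabla h(x)\in\mathbb{R}^{m\times n}$ denotes the transposed Jacobian, $\|\cdot\|$ the Euclidean norm (operator norm for matrices), $\psi(x):=\frac12\|h(x)\|^2$, $\nabla\psi(x)=\nabla h(x)h(x)$; $\Omega:=\{x:h(x)=0\}\ne\emptyset$; $\mathbb{B}(x,r)$ is the closed ball of radius $r$ about $x$; $\mathcal{L}(x_0):=\{x:\psi(x)\le\psi(x_0)\}$; $q_k(d):=\frac12\|\nabla h(x_k)^Td+h(x_k)\|^2$. Assumptions: (A1) $h$ is Hölder metrically subregular of order $\delta\in\,]0,1]$ at $(x^*,0)$: there are $\beta>0$, $\mathtt r\in\,]0,1[$ with $\beta\,\mathrm{dist}(x,\Omega)\le\|h(x)\|^\delta$ for all $x\in\mathbb{B}(x^*,\mathtt r)$. (A2) $\mathcal{L}(x_0)$ is bounded. (A3) $\|\nabla h(x)-\nabla h(y)\|\le L\|x-y\|$ for all $x,y$. (A4) $\psi$ satisfies the Łojasiewicz gradient inequality: for every critical point $\bar x$ of $\psi$ there exist $\kappa>0$, $r_{\bar x}>0$ and $\theta\in[0,1[$ such that $|\psi(x)-\psi(\bar x)|^\theta\le\kappa\|\nabla\psi(x)\|$ for all $x\in\mathbb{B}(\bar x,r_{\bar x})$. Algorithm LMTR: parameters $x_0$, $\varepsilon>0$, $\eta\in\,]0,4\delta[$, $0<\rho_2<1<\rho_1$, $0<\upsilon_1<\upsilon_2<1$, $\mu_{\min}>0$, $0\le\xi_{\min}\le\xi_{\max}$,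 $0\le\omega_{\min}\le\omega_{\max}$ with $\xi_{\min}+\omega_{\min}>0$, $0\le\theta_{\min}\le\theta_{\max}<1$, sequences $\xi_k\in[\xi_{\min},\xi_{\max}]$, $\omega_k\in[\omega_{\min},\omega_{\max}]$, $\theta_k\in[\theta_{\min},\theta_{\max}]$; $\lambda_0:=1$, $D_0:=\psi(x_0)$. At iteration $k$: stop if $\|h(x_k)\|\le\varepsilon$ or $\|\nabla\psi(x_k)\|\le\varepsilon$. Otherwise $\mu_k:=\xi_k\|h(x_k)\|^\eta+\omega_k\|\nabla h(x_k)h(x_k)\|^\eta$. For a value $\lambda>0$ set $\widehat\mu:=\max\{\mu_{\min},\lambda\mu_k\}$, let $d$ solve $(\nabla h(x_k)\nabla h(x_k)^T+\widehat\mu I)d=-\nabla h(x_k)h(x_k)$ and $\widehat r:=(D_k-\psi(x_k+d))/(q_k(0)-q_k(d))$. Starting from $\lambda=\lambda_k$, replace $\lambda$ by $\rho_1\lambda$ as long as $\widehat r<\upsilon_1$; $p_k$ is the number of replacements and the accepted step is the final $d$. Then $x_{k+1}:=x_k+(\text{accepted step})$, $\lambda_{k+1}:=\rho_2\rho_1^{p_k}\lambda_k$ if the final $\widehat r\ge\upsilon_2$, else $\lambda_{k+1}:=\rho_1^{p_k}\lambda_k$, and $D_{k+1}:=(1-\theta_k)\psi(x_{k+1})+\theta_kD_k$. *)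

theory Defs
  imports "HOL-Analysis.Analysis"
begin

text \<open>Its Jacobian at x is
  the n x m matrix Jac x :: real^'m^'n (so h'(x) v = Jac x *v v); the paper's transposed
  Jacobian nabla h(x) in R^(m x n) is transpose (Jac x).\<close>

definition psi :: "(real^'m \<Rightarrow> real^'n) \<Rightarrow> real^'m \<Rightarrow> real" where
  "psi h x = (norm (h x))\<^sup>2 / 2"

definition grad_psi :: "(real^'m \<Rightarrow> real^'n) \<Rightarrow> (real^'m \<Rightarrow> real^'m^'n) \<Rightarrow> real^'m \<Rightarrow> real^'m" where
  "grad_psi h Jac x = transpose (Jac x) *v h x"

definition qmod :: "(real^'m \<Rightarrow> real^'n) \<Rightarrow> (real^'m \<Rightarrow> real^'m^'n) \<Rightarrow> real^'m \<Rightarrow> real^'m \<Rightarrow> real" where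
  "qmod h Jac x d = (norm (Jac x *v d + h x))\<^sup>2 / 2"

definition lm_dir :: "(real^'m \<Rightarrow> real^'n) \<Rightarrow> (real^'m \<Rightarrow> real^'m^'n) \<Rightarrow> real^'m \<Rightarrow> real \<Rightarrow> real^'m" where
  "lm_dir h Jac x mu =
     (SOME d. (transpose (Jac x) ** Jac x + mu *\<^sub>R mat 1) *v d = - (transpose (Jac x) *v h x))"

definition lm_mu :: "(real^'m \<Rightarrow> real^'n) \<Rightarrow> (real^'m \<Rightarrow> real^'m^'n) \<Rightarrow> real \<Rightarrow> real \<Rightarrow> real \<Rightarrow> real^'m \<Rightarrow> real" where
  "lm_mu h Jac eta xi om x = xi * norm (h x) powr eta + om * norm (grad_psi h Jac x) powr eta"

definition lm_ratio :: "(real^'m \<Rightarrow> real^'n) \<Rightarrow> (real^'m \<Rightarrow> real^'m^'n) \<Rightarrow> real \<Rightarrow> real \<Rightarrow> real \<Rightarrow> real^'m \<Rightarrow> real \<Rightarrow> real" where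
  "lm_ratio h Jac mumin mu D x lam =
     (let d = lm_dir h Jac x (max mumin (lam * mu))
      in (D - psi h (x + d)) / (qmod h Jac x 0 - qmod h Jac x d))"

text \<open>The sequences (x_k, lambda_k, D_k, p_k) generated by LMTR with tolerance epsilon = 0:
  if iteration k stops (h(x_k) = 0 or nabla psi(x_k) = 0), the sequence stays constant from then on.
  Otherwise p_k is the number of times lambda is multiplied by rho1 in the inner loop, i.e.
  the first j with r-hat(rho1^j lambda_k) >= upsilon1.\<close>
definition lmtr_seq ::
  "(real^'m \<Rightarrow> real^'n) \<Rightarrow> (real^'m \<Rightarrow> real^'m^'n) \<Rightarrow> real \<Rightarrow> real \<Rightarrow> real \<Rightarrow> real \<Rightarrow> real \<Rightarrow> real
   \<Rightarrow> (nat \<Rightarrow> real) \<Rightarrow> (nat \<Rightarrow> real) \<Rightarrow> (nat \<Rightarrow> real)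
   \<Rightarrow> (nat \<Rightarrow> real^'m) \<Rightarrow> (nat \<Rightarrow> real) \<Rightarrow> (nat \<Rightarrow> real) \<Rightarrow> (nat \<Rightarrow> nat) \<Rightarrow> bool" where
  "lmtr_seq h Jac eta rho1 rho2 ups1 ups2 mumin xi om th x lam D p \<longleftrightarrow>
     lam 0 = 1 \<and> D 0 = psi h (x 0) \<and>
     (\<forall>k. if h (x k) = 0 \<or> grad_psi h Jac (x k) = 0
          then x (Suc k) = x k \<and> lam (Suc k) = lam k \<and> D (Suc k) = D k
          else (let mu = lm_mu h Jac eta (xi k) (om k) (x k);
                    r = (\<lambda>j::nat. lm_ratio h Jac mumin mu (D k) (x k) (rho1 ^ j * lam k))
                in (\<forall>j < p k. r j < ups1) \<and> ups1 \<le> r (p k) \<and>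
                   x (Suc k) = x k + lm_dir h Jac (x k) (max mumin (rho1 ^ p k * lam k * mu)) \<and>
                   lam (Suc k) = (if ups2 \<le> r (p k) then rho2 * rho1 ^ p k * lam k
                                  else rho1 ^ p k * lam k) \<and>
                   D (Suc k) = (1 - th k) * psi h (x (Suc k)) + th k * D k))"

end

theory Submission
  imports Defs
begin

(*
  Near the limit, h(x_k) and grad psi(x_k) tend to zero, so the Taylor error of the linearised
  model becomes negligible against the regularisation mu_hat >= mu_min: the first trial value
  lambda_k is eventually accepted, lambda_k stops growing and mu_hat stays bounded. The LM
  equation then gives |grad psi(x_k)| <= Q |d_k|, so each step lowers the reference value D_k
  by at least c |grad psi(x_k)|^2, hence by c psi(x_k)^(2 theta) by the Lojasiewicz inequality.
  As D_(k+1) is a convex combination of psi(x_(k+1)) and D_k, one of two consecutive steps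
  always makes progress: D_(k+2) <= D_k - c D_k^(2 theta), where theta >= 1/2 may be assumed
  because psi(x_k) <= 1 eventually. For theta = 1/2 this is a contraction; for theta > 1/2 the
  powers D_k^(1 - 2 theta) grow linearly. Hoelder metric subregularity turns bounds on psi into
  bounds on dist(x_k, Omega).
*)

section \<open>Real sequences with a power-type decrease\<close>

lemma powr_neg_ge_one_plus:
  fixes r s :: real
  assumes "0 < r" "0 < s"
  shows "1 + s * (1 - r) \<le> r powr (- s)"
proof -
  have "1 - r \<le> - ln r" using ln_le_minus_one[OF \<open>0 < r\<close>] by simp
  then have "1 + s * (1 - r) \<le> 1 + s * (- ln r)"
    using mult_left_mono[of "1 - r" "- ln r" s] \<open>0 < s\<close> by simp
  also have "\<dots> \<le> exp (s * (- ln r))" by (rule exp_ge_add_one_self)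
  finally show ?thesis using \<open>0 < r\<close> by (simp add: powr_def)
qed

lemma powr_neg_increment:
  fixes a b c s :: real
  assumes "0 < a" "0 < b" "0 < s" "0 < c"
    and decrease: "b \<le> a - c * a powr (1 + s)"
  shows "a powr (- s) + s * c \<le> b powr (- s)"
proof -
  define r where "r = b / a"
  have r: "0 < r" "b = a * r" using assms(1,2) by (simp_all add: r_def)
  have "a * r \<le> a * (1 - c * a powr s)"
    using decrease r(2) \<open>0 < a\<close> by (simp add: powr_add algebra_simps)
  then have "s * (c * a powr s) \<le> s * (1 - r)"
    using \<open>0 < a\<close> \<open>0 < s\<close> by (simp add: mult_left_mono)
  also have "1 + s * (1 - r) \<le> r powr (- s)" by (rule powr_neg_ge_one_plus[OF r(1) \<open>0 < s\<close>])
  finally have "a powr (- s) * (1 + s * c * a powr s) \<le> a powr (- s) * r powr (- s)"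
    by (simp add: mult_left_mono mult.assoc)
  also have "\<dots> = b powr (- s)" using assms(1) r by (simp add: powr_mult)
  finally show ?thesis using \<open>0 < a\<close> by (simp add: algebra_simps powr_minus field_simps)
qed

lemma power_decrease_sublinear_rate:
  fixes e :: "nat \<Rightarrow> real" and s c :: real
  assumes "0 < s" "0 < c"
    and nonneg: "\<And>k. 0 \<le> e k" and antimono: "\<And>k. e (Suc k) \<le> e k"
    and decrease: "\<And>k. K \<le> k \<Longrightarrow> e (k + 2) \<le> e k - c * e k powr (1 + s)"
  shows "\<exists>\<sigma>>0. \<forall>\<^sub>F k in sequentially. e k \<le> \<sigma> * real k powr (- 1 / s)"
proof -
  \<comment> \<open>the disjunction is needed because \<open>0 powr (- s) = 0\<close>\<close>
  have inverse_power_grows: "e (K + 2 * j) = 0 \<or> real j * (s * c) \<le> e (K + 2 * j) powr (- s)" for j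
  proof (induction j)
    case (Suc j)
    let ?a = "e (K + 2 * j)" and ?b = "e (K + 2 * Suc j)"
    have step: "?b \<le> ?a - c * ?a powr (1 + s)"
      using decrease[of "K + 2 * j"] by (simp add: algebra_simps)
    show ?case
    proof (cases "?a = 0 \<or> ?b = 0")
      case True
      then show ?thesis using step nonneg[of "K + 2 * Suc j"] by auto
    next
      case False
      then have "0 < ?a" "0 < ?b" using nonneg by (simp_all add: less_le)
      then have "?a powr (- s) + s * c \<le> ?b powr (- s)"
        using powr_neg_increment[OF _ _ \<open>0 < s\<close> \<open>0 < c\<close> step] by blast
      then show ?thesis using Suc.IH False by (simp add: algebra_simps)
    qed
  qed simp
  define \<sigma> where "\<sigma> = (s * c / 4) powr (- 1 / s)"
  have "e k \<le> \<sigma> * real k powr (- 1 / s)" if k: "2 * K + 4 \<le> k" for k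
  proof -
    define j where "j = (k - K) div 2"
    have j: "K + 2 * j \<le> k" "real k \<le> 4 * real j" "0 < j" using k unfolding j_def by auto
    have ek: "e k \<le> e (K + 2 * j)" by (rule lift_Suc_antimono_le[of e, OF antimono j(1)])
    show ?thesis
    proof (cases "e (K + 2 * j) = 0")
      case True
      have "0 \<le> \<sigma> * real k powr (- 1 / s)" by (simp add: \<sigma>_def)
      then show ?thesis using ek True by linarith
    next
      case False
      then have pos: "0 < e (K + 2 * j)" using nonneg by (simp add: less_le)
      have "e (K + 2 * j) = (e (K + 2 * j) powr (- s)) powr (- 1 / s)"
        using pos \<open>0 < s\<close> by (simp add: powr_powr)
      also have "\<dots> \<le> (real j * (s * c)) powr (- 1 / s)"
        using inverse_power_grows[of j] False j(3) \<open>0 < s\<close> \<open>0 < c\<close>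
        by (intro powr_mono2') auto
      also have "\<dots> \<le> (real k * (s * c / 4)) powr (- 1 / s)"
        using j \<open>0 < s\<close> \<open>0 < c\<close> by (intro powr_mono2') (auto simp: field_simps)
      also have "\<dots> = \<sigma> * real k powr (- 1 / s)"
        using j \<open>0 < s\<close> \<open>0 < c\<close> by (simp add: \<sigma>_def powr_mult[symmetric] mult.commute)
      finally show ?thesis using ek by simp
    qed
  qed
  moreover have "0 < \<sigma>" using \<open>0 < s\<close> \<open>0 < c\<close> by (simp add: \<sigma>_def)
  ultimately show ?thesis unfolding eventually_sequentially by blast
qed

lemma two_step_contraction_geometric:
  fixes e :: "nat \<Rightarrow> real" and q :: real
  assumes "0 < q" "q < 1" and contraction: "\<And>k. K \<le> k \<Longrightarrow> e (k + 2) \<le> q * e k"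
  shows "\<exists>C r. 0 < r \<and> r < 1 \<and> (\<forall>\<^sub>F k in sequentially. e k \<le> C * r ^ k)"
proof -
  define r where "r = sqrt q"
  have r: "0 < r" "r < 1" "r\<^sup>2 = q" using assms(1,2) by (simp_all add: r_def real_sqrt_lt_1_iff)
  define C where "C = max (e K / r ^ K) (e (Suc K) / r ^ Suc K)"
  have "e k \<le> C * r ^ k" if "K \<le> k" for k
    using that
  proof (induction k rule: less_induct)
    case (less k)
    show ?case
    proof (cases "k = K \<or> k = Suc K")
      case True
      then have "e k / r ^ k \<le> C" by (auto simp: C_def)
      then show ?thesis using r(1) by (simp add: field_simps)
    next
      case False
      define n where "n = k - 2"
      have n: "k = n + 2" "K \<le> n" using False less.prems by (auto simp: n_def)
      have "e k \<le> q * e n" using contraction[OF n(2)] n(1) by simp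
      also have "\<dots> \<le> q * (C * r ^ n)"
        using \<open>0 < q\<close> less.IH[of n] n by (intro mult_left_mono) auto
      also have "\<dots> = C * r ^ k" using n(1) r(3) by (simp add: power_add power2_eq_square ac_simps)
      finally show ?thesis .
    qed
  qed
  then show ?thesis using r unfolding eventually_sequentially by blast
qed

lemma eventually_geometric_bound_imp_geometric_bound:
  fixes f :: "nat \<Rightarrow> real" and q C :: real
  assumes "0 < q" and "\<forall>\<^sub>F k in sequentially. f k \<le> C * q ^ k"
  shows "\<exists>c>0. \<forall>k. f k \<le> c * q ^ k"
proof -
  obtain K where K: "\<And>k. K \<le> k \<Longrightarrow> f k \<le> C * q ^ k"
    using assms(2) unfolding eventually_sequentially by blast
  define S where "S = (\<Sum>i<K. \<bar>f i\<bar> / q ^ i)"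
  have "0 \<le> S" using \<open>0 < q\<close> unfolding S_def by (intro sum_nonneg) simp
  have "f k \<le> (max C 1 + S) * q ^ k" for k
  proof (cases "K \<le> k")
    case True
    have "C * q ^ k \<le> (max C 1 + S) * q ^ k"
      using \<open>0 \<le> S\<close> \<open>0 < q\<close> by (intro mult_right_mono) auto
    then show ?thesis using K[OF True] by linarith
  next
    case False
    have "\<bar>f k\<bar> / q ^ k \<le> S"
      unfolding S_def by (rule member_le_sum) (use False \<open>0 < q\<close> in auto)
    also have "\<dots> \<le> max C 1 + S" by simp
    finally show ?thesis using \<open>0 < q\<close> by (simp add: field_simps)
  qed
  moreover have "0 < max C 1 + S" using \<open>0 \<le> S\<close> by linarith
  ultimately show ?thesis by blast
qed

lemma nonmonotone_two_step_power_decrease: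
  fixes D0 D1 D2 \<psi>1 X a c t :: real
  assumes "0 \<le> \<psi>1" "\<psi>1 \<le> D0" "D0 \<le> X" "1 \<le> X" "1 \<le> a" "0 < c" "0 \<le> t" "t < 1"
    and first: "(1 - t) * (D0 - \<psi>1) \<le> D0 - D1"
    and second: "(1 - t) * (c * \<psi>1 powr a) \<le> D1 - D2"
  shows "D2 \<le> D0 - (1 - t) * min (X powr (1 - a) / 2) (c / 2 powr a) * D0 powr a"
proof -
  define m where "m = min (X powr (1 - a) / 2) (c / 2 powr a)"
  have "m * D0 powr a \<le> (D0 - \<psi>1) + c * \<psi>1 powr a"
  proof (cases "\<psi>1 \<le> D0 / 2")
    case True
    have "X powr (1 - a) * D0 powr a \<le> D0"
    proof (cases "D0 = 0")
      case False
      then have "0 < D0" using assms(1,2) by linarith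
      have "X powr (1 - a) * D0 powr a = X powr (1 - a) * D0 powr (a - 1) * D0"
        using \<open>0 < D0\<close> by (simp add: powr_diff)
      also have "\<dots> \<le> X powr (1 - a) * X powr (a - 1) * D0"
        using \<open>0 < D0\<close> assms(3,5) by (intro mult_right_mono mult_left_mono powr_mono2) auto
      also have "\<dots> = D0" using assms(4) by (simp add: powr_add[symmetric])
      finally show ?thesis .
    qed simp
    have "m * D0 powr a \<le> X powr (1 - a) / 2 * D0 powr a"
      unfolding m_def by (intro mult_right_mono min.cobounded1) simp
    also have "\<dots> \<le> D0 - \<psi>1" using \<open>X powr (1 - a) * D0 powr a \<le> D0\<close> True by simp
    finally show ?thesis using assms(6) by (simp add: add_increasing2)
  next
    case False
    have "m * D0 powr a \<le> c / 2 powr a * D0 powr a"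
      unfolding m_def by (intro mult_right_mono min.cobounded2) simp
    also have "\<dots> = c * (D0 / 2) powr a" using assms(1,2) by (simp add: powr_divide)
    also have "\<dots> \<le> c * \<psi>1 powr a"
      using False assms(1,2,5,6) by (intro mult_left_mono powr_mono2) auto
    finally show ?thesis using assms(2) by linarith
  qed
  then have "(1 - t) * (m * D0 powr a) \<le> (1 - t) * ((D0 - \<psi>1) + c * \<psi>1 powr a)"
    using assms(8) by (intro mult_left_mono) auto
  then show ?thesis using first second by (simp add: m_def algebra_simps)
qed

section \<open>The Levenberg-Marquardt step\<close>

lemma inner_vector_matrix: "(v::real^'m) \<bullet> (w v* (J::real^'m^'n)) = (J *v v) \<bullet> w"
  by (metis dot_lmul_matrix inner_commute)

lemma matrix_entry_le_norm: "\<bar>A $ i $ j\<bar> \<le> norm (A :: real^'n^'m)"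
  by (rule order_trans[OF component_le_norm_cart Finite_Cartesian_Product.norm_nth_le])

lemma norm_matrix_vector_mult_le:
  fixes A :: "real^'n^'m"
  assumes "\<And>i j. \<bar>A $ i $ j\<bar> \<le> B"
  shows "norm (A *v v) \<le> real CARD('m) * real CARD('n) * B * norm v"
proof -
  have "norm (A *v v) \<le> onorm ((*v) A) * norm v"
    by (rule onorm) simp
  also have "\<dots> \<le> real CARD('m) * real CARD('n) * B * norm v"
    by (rule mult_right_mono[OF onorm_le_matrix_component[OF assms]]) simp
  finally show ?thesis .
qed

lemma lm_system_apply:
  "(transpose (J::real^'m^'n) ** J + mu *\<^sub>R mat 1) *v d = transpose J *v (J *v d) + mu *\<^sub>R d"
  by (simp add: matrix_vector_mult_add_rdistrib matrix_vector_mul_assoc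
      scaleR_matrix_vector_assoc[symmetric])

lemma lm_system_solvable:
  fixes J :: "real^'m^'n"
  assumes "0 < mu"
  shows "\<exists>d. (transpose J ** J + mu *\<^sub>R mat 1) *v d = y"
proof -
  let ?A = "transpose J ** J + mu *\<^sub>R mat 1"
  have "d = 0" if "?A *v d = 0" for d
  proof -
    have "(norm (J *v d))\<^sup>2 + mu * (norm d)\<^sup>2 = d \<bullet> (?A *v d)"
      by (simp add: lm_system_apply inner_add_right inner_vector_matrix
          power2_norm_eq_inner)
    then have "(norm (J *v d))\<^sup>2 + mu * (norm d)\<^sup>2 = 0" using that by simp
    then have "mu * (norm d)\<^sup>2 \<le> 0" using zero_le_power2[of "norm (J *v d)"] by linarith
    then show "d = 0" using \<open>0 < mu\<close> by (simp add: mult_le_0_iff)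
  qed
  then have "inj ((*v) ?A)"
    by (intro linear_inj_on_iff_eq_0[THEN iffD2]) auto
  then show ?thesis
    using linear_injective_imp_surjective[OF matrix_vector_mul_linear] by (metis surjD)
qed

lemma lm_dir_eq:
  fixes h :: "real^'m \<Rightarrow> real^'n" and Jac :: "real^'m \<Rightarrow> real^'m^'n" and y :: "real^'m"
  assumes "0 < mu"
  defines "d \<equiv> lm_dir h Jac y mu"
  shows "transpose (Jac y) *v (Jac y *v d) + mu *\<^sub>R d = - grad_psi h Jac y"
proof -
  have "(transpose (Jac y) ** Jac y + mu *\<^sub>R mat 1) *v d = - (transpose (Jac y) *v h y)"
    unfolding d_def lm_dir_def by (rule someI_ex[OF lm_system_solvable[OF \<open>0 < mu\<close>]])
  then show ?thesis by (simp only: lm_system_apply grad_psi_def)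
qed

lemma lm_dir_inner_grad:
  fixes h :: "real^'m \<Rightarrow> real^'n" and Jac :: "real^'m \<Rightarrow> real^'m^'n" and y :: "real^'m"
  assumes "0 < mu"
  defines "d \<equiv> lm_dir h Jac y mu"
  shows "d \<bullet> grad_psi h Jac y = - ((norm (Jac y *v d))\<^sup>2 + mu * (norm d)\<^sup>2)"
proof -
  have "d \<bullet> grad_psi h Jac y = - (d \<bullet> (transpose (Jac y) *v (Jac y *v d) + mu *\<^sub>R d))"
    using lm_dir_eq[OF assms(1)] unfolding d_def by (metis inner_minus_right minus_minus)
  then show ?thesis
    by (simp add: inner_add_right inner_vector_matrix power2_norm_eq_inner)
qed

lemma lm_dir_predicted_reduction:
  fixes h :: "real^'m \<Rightarrow> real^'n" and Jac :: "real^'m \<Rightarrow> real^'m^'n" and y :: "real^'m"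
  assumes "0 < mu"
  defines "d \<equiv> lm_dir h Jac y mu"
  shows "qmod h Jac y 0 - qmod h Jac y d = (norm (Jac y *v d))\<^sup>2 / 2 + mu * (norm d)\<^sup>2"
proof -
  have "(norm (Jac y *v d + h y))\<^sup>2 = (norm (Jac y *v d))\<^sup>2 + 2 * (d \<bullet> grad_psi h Jac y) + (norm (h y))\<^sup>2"
    by (simp add: grad_psi_def power2_norm_eq_inner inner_add_left inner_add_right
        inner_commute inner_vector_matrix)
  moreover have "qmod h Jac y 0 - qmod h Jac y d = ((norm (h y))\<^sup>2 - (norm (Jac y *v d + h y))\<^sup>2) / 2"
    by (simp add: qmod_def diff_divide_distrib)
  ultimately show ?thesis
    using lm_dir_inner_grad[OF assms(1), where h=h and Jac=Jac and y=y] unfolding d_def by argo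
qed

lemma lm_dir_norm_le:
  fixes h :: "real^'m \<Rightarrow> real^'n" and Jac :: "real^'m \<Rightarrow> real^'m^'n" and y :: "real^'m"
  assumes "0 < mu"
  shows "mu * norm (lm_dir h Jac y mu) \<le> norm (grad_psi h Jac y)"
proof -
  let ?d = "lm_dir h Jac y mu"
  have "mu * (norm ?d)\<^sup>2 \<le> - (?d \<bullet> grad_psi h Jac y)"
    using lm_dir_inner_grad[OF assms, where h=h and Jac=Jac and y=y] by simp
  also have "\<dots> \<le> norm ?d * norm (grad_psi h Jac y)"
    using Cauchy_Schwarz_ineq2[of ?d "grad_psi h Jac y"] by linarith
  finally show ?thesis by (cases "?d = 0") (auto simp: power2_eq_square)
qed

lemma lm_dir_nonzero:
  fixes h :: "real^'m \<Rightarrow> real^'n" and Jac :: "real^'m \<Rightarrow> real^'m^'n" and y :: "real^'m"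
  assumes "0 < mu" "grad_psi h Jac y \<noteq> 0"
  shows "lm_dir h Jac y mu \<noteq> 0"
  using lm_dir_eq[OF assms(1), where h=h and Jac=Jac and y=y] assms(2) by auto

lemma qmod_zero [simp]: "qmod h Jac y 0 = psi h y"
  by (simp add: qmod_def psi_def)

lemma psi_nonneg: "0 \<le> psi h y"
  by (simp add: psi_def)

lemma lipschitz_derivative_remainder_bound:
  fixes f :: "'a::real_normed_vector \<Rightarrow> 'b::real_normed_vector"
  assumes deriv: "\<And>y. (f has_derivative f' y) (at y)"
    and lipschitz: "\<And>y z. onorm (f' y - f' z) \<le> L * norm (y - z)"
  shows "norm (f (x + d) - f x - f' x d) \<le> L * (norm d)\<^sup>2"
proof (cases "d = 0")
  case True
  then show ?thesis
    using linear_simps(3)[OF has_derivative_bounded_linear[OF deriv]] by simp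
next
  case False
  let ?S = "closed_segment x (x + d)"
  have "0 \<le> onorm (f' (x + d) - f' x)"
    unfolding fun_diff_def
    by (intro onorm_pos_le bounded_linear_sub has_derivative_bounded_linear[OF deriv])
  then have "0 \<le> L * norm d" using lipschitz[of "x + d" x] by simp
  then have "0 \<le> L" using False by (simp add: zero_le_mult_iff)
  have "norm (f (x + d) - f x - f' x (x + d - x)) \<le> norm (x + d - x) * (L * norm d)"
  proof (rule differentiable_bound_linearization[where S = ?S])
    show "x + t *\<^sub>R (x + d - x) \<in> ?S" if "t \<in> {0..1}" for t
      using that by (auto simp: closed_segment_def algebra_simps)
    show "(f has_derivative f' y) (at y within ?S)" for y
      using deriv has_derivative_at_withinI by blast
    show "onorm (f' y - f' x) \<le> L * norm d" if "y \<in> ?S" for y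
      using lipschitz[of y x] segment_bound1[OF that] \<open>0 \<le> L\<close>
      by (metis add_diff_cancel_left' mult_left_mono order_trans)
  qed simp
  then show ?thesis by (simp add: power2_eq_square mult_ac)
qed

lemma psi_step_le_qmod:
  fixes h :: "real^'m \<Rightarrow> real^'n" and Jac :: "real^'m \<Rightarrow> real^'m^'n"
  assumes deriv: "\<And>y. (h has_derivative (\<lambda>v. Jac y *v v)) (at y)"
    and lipschitz: "\<And>y z. onorm (\<lambda>v. (Jac y - Jac z) *v v) \<le> L * norm (y - z)"
    and model_decrease: "qmod h Jac y d \<le> psi h y"
  shows "psi h (y + d) \<le> qmod h Jac y d + (norm d)\<^sup>2 * (norm (h y) * L + L\<^sup>2 / 2 * (norm d)\<^sup>2)"
proof -
  define w where "w = Jac y *v d + h y"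
  define R where "R = h (y + d) - h y - Jac y *v d"
  have "norm R \<le> L * (norm d)\<^sup>2"
    unfolding R_def
  proof (rule lipschitz_derivative_remainder_bound[OF deriv])
    show "onorm ((\<lambda>v. Jac y' *v v) - (\<lambda>v. Jac z *v v)) \<le> L * norm (y' - z)" for y' z
      using lipschitz[of y' z] by (simp add: fun_diff_def matrix_vector_mult_diff_rdistrib)
  qed
  moreover have "norm w \<le> norm (h y)"
    using model_decrease by (simp add: qmod_def psi_def w_def power2_le_iff_abs_le)
  ultimately have "norm w * norm R \<le> norm (h y) * (L * (norm d)\<^sup>2)"
    by (intro mult_mono) auto
  have "psi h (y + d) = (norm (w + R))\<^sup>2 / 2" by (simp add: psi_def w_def R_def)
  also have "\<dots> \<le> (norm w + norm R)\<^sup>2 / 2"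
    by (simp add: norm_triangle_ineq power_mono)
  also have "\<dots> = (norm w)\<^sup>2 / 2 + norm w * norm R + (norm R)\<^sup>2 / 2"
    by (simp add: power2_sum)
  also have "\<dots> \<le> (norm w)\<^sup>2 / 2 + norm (h y) * (L * (norm d)\<^sup>2) + (L * (norm d)\<^sup>2)\<^sup>2 / 2"
    using \<open>norm w * norm R \<le> _\<close> \<open>norm R \<le> _\<close> by (intro add_mono divide_right_mono power_mono) auto
  also have "\<dots> = qmod h Jac y d + (norm d)\<^sup>2 * (norm (h y) * L + L\<^sup>2 / 2 * (norm d)\<^sup>2)"
    by (simp add: qmod_def w_def power2_eq_square algebra_simps)
  finally show ?thesis .
qed

lemma lm_ratio_ge:
  fixes h :: "real^'m \<Rightarrow> real^'n" and Jac :: "real^'m \<Rightarrow> real^'m^'n"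
  assumes deriv: "\<And>y. (h has_derivative (\<lambda>v. Jac y *v v)) (at y)"
    and lipschitz: "\<And>y z. onorm (\<lambda>v. (Jac y - Jac z) *v v) \<le> L * norm (y - z)"
    and "0 < mumin" "ups \<le> 1" "grad_psi h Jac y \<noteq> 0" "psi h y \<le> Dv"
    and small: "norm (h y) * L + L\<^sup>2 / 2 * (norm (grad_psi h Jac y) / mumin)\<^sup>2 \<le> (1 - ups) * mumin"
  shows "ups \<le> lm_ratio h Jac mumin mu Dv y lam"
proof -
  define mu' where "mu' = max mumin (lam * mu)"
  define d where "d = lm_dir h Jac y mu'"
  define pred where "pred = qmod h Jac y 0 - qmod h Jac y d"
  have "0 < mu'" "mumin \<le> mu'" using \<open>0 < mumin\<close> by (simp_all add: mu'_def)
  have pred_ge: "mu' * (norm d)\<^sup>2 \<le> pred"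
    using lm_dir_predicted_reduction[OF \<open>0 < mu'\<close>, where h=h and Jac=Jac and y=y]
    by (simp add: pred_def d_def)
  have "d \<noteq> 0" using lm_dir_nonzero[OF \<open>0 < mu'\<close> assms(5)] by (simp add: d_def)
  then have "0 < mu' * (norm d)\<^sup>2" using \<open>0 < mu'\<close> by simp
  then have "0 < pred" using pred_ge by linarith
  have "mumin * norm d \<le> norm (grad_psi h Jac y)"
    using lm_dir_norm_le[OF \<open>0 < mu'\<close>, where h=h and Jac=Jac and y=y] \<open>mumin \<le> mu'\<close> unfolding d_def
    by (meson mult_right_mono norm_ge_zero order_trans)
  then have "(norm d)\<^sup>2 \<le> (norm (grad_psi h Jac y) / mumin)\<^sup>2"
    using \<open>0 < mumin\<close> by (intro power_mono) (simp_all add: field_simps)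
  then have "L\<^sup>2 / 2 * (norm d)\<^sup>2 \<le> L\<^sup>2 / 2 * (norm (grad_psi h Jac y) / mumin)\<^sup>2"
    by (rule mult_left_mono) simp
  with small have error: "norm (h y) * L + L\<^sup>2 / 2 * (norm d)\<^sup>2 \<le> (1 - ups) * mumin"
    by linarith
  have "psi h (y + d) \<le> qmod h Jac y d + (norm d)\<^sup>2 * (norm (h y) * L + L\<^sup>2 / 2 * (norm d)\<^sup>2)"
    using \<open>0 < pred\<close> by (intro psi_step_le_qmod[OF deriv lipschitz]) (simp add: pred_def)
  also have "\<dots> \<le> qmod h Jac y d + (1 - ups) * (mumin * (norm d)\<^sup>2)"
    using mult_left_mono[OF error, of "(norm d)\<^sup>2"] by (simp add: ac_simps)
  also have "\<dots> \<le> qmod h Jac y d + (1 - ups) * pred"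
  proof -
    have "mumin * (norm d)\<^sup>2 \<le> pred"
      using mult_right_mono[OF \<open>mumin \<le> mu'\<close>, of "(norm d)\<^sup>2"] pred_ge by simp
    then show ?thesis using \<open>ups \<le> 1\<close> by (simp add: mult_left_mono)
  qed
  finally have "ups * pred \<le> Dv - psi h (y + d)"
    using \<open>psi h y \<le> Dv\<close> by (simp add: pred_def algebra_simps)
  then show ?thesis
    using \<open>0 < pred\<close> by (simp add: lm_ratio_def mu'_def d_def pred_def Let_def field_simps)
qed

section \<open>Iterates of LMTR converging to a solution\<close>

locale lmtr_convergent =
  fixes h :: "real^'m \<Rightarrow> real^'n" and Jac :: "real^'m \<Rightarrow> real^'m^'n" and L :: real
    and eta rho1 rho2 ups1 ups2 mumin ximax ommax thmax :: real
    and xi om th :: "nat \<Rightarrow> real"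
    and x :: "nat \<Rightarrow> real^'m" and lam D :: "nat \<Rightarrow> real" and p :: "nat \<Rightarrow> nat"
    and xs :: "real^'m"
  assumes deriv: "\<And>y. (h has_derivative (\<lambda>v. Jac y *v v)) (at y)"
    and Jac_continuous: "isCont Jac xs"
    and Jac_lipschitz: "\<And>y z. onorm (\<lambda>v. (Jac y - Jac z) *v v) \<le> L * norm (y - z)"
    and eta: "0 < eta"
    and rho: "0 < rho1" "0 < rho2" "rho2 < 1"
    and ups1: "0 < ups1" "ups1 < 1"
    and mumin: "0 < mumin"
    and xi: "\<And>k. 0 \<le> xi k" "\<And>k. xi k \<le> ximax"
    and om: "\<And>k. 0 \<le> om k" "\<And>k. om k \<le> ommax"
    and th: "\<And>k. 0 \<le> th k" "\<And>k. th k \<le> thmax" "thmax < 1"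
    and generated: "lmtr_seq h Jac eta rho1 rho2 ups1 ups2 mumin xi om th x lam D p"
    and convergent: "x \<longlonglongrightarrow> xs" and solution: "h xs = 0"
begin

abbreviation "\<Omega> \<equiv> {z. h z = 0}"
abbreviation "grad k \<equiv> grad_psi h Jac (x k)"
abbreviation "stops k \<equiv> h (x k) = 0 \<or> grad k = 0"
abbreviation "\<mu> k \<equiv> lm_mu h Jac eta (xi k) (om k) (x k)"
abbreviation "ratio k j \<equiv> lm_ratio h Jac mumin (\<mu> k) (D k) (x k) (rho1 ^ j * lam k)"
abbreviation "\<mu>_hat k \<equiv> max mumin (rho1 ^ p k * lam k * \<mu> k)"
abbreviation "step k \<equiv> lm_dir h Jac (x k) (\<mu>_hat k)"
abbreviation "pred k \<equiv> qmod h Jac (x k) 0 - qmod h Jac (x k) (step k)"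

lemma lmtr_step:
  assumes "\<not> stops k"
  shows "(\<forall>j < p k. ratio k j < ups1) \<and> ups1 \<le> ratio k (p k) \<and> x (Suc k) = x k + step k \<and>
    lam (Suc k) = (if ups2 \<le> ratio k (p k) then rho2 * rho1 ^ p k * lam k else rho1 ^ p k * lam k) \<and>
    D (Suc k) = (1 - th k) * psi h (x (Suc k)) + th k * D k"
  using generated assms unfolding lmtr_seq_def Let_def by (metis (no_types, lifting))

lemma lmtr_stop:
  assumes "stops k"
  shows "x (Suc k) = x k" "lam (Suc k) = lam k" "D (Suc k) = D k"
  using generated assms unfolding lmtr_seq_def by metis+

lemma lmtr_init: "lam 0 = 1" "D 0 = psi h (x 0)"
  using generated unfolding lmtr_seq_def by auto

lemma mu_hat_pos: "0 < \<mu>_hat k"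
  using mumin by linarith

lemma pred_ge: "\<mu>_hat k * (norm (step k))\<^sup>2 \<le> pred k"
  using lm_dir_predicted_reduction[OF mu_hat_pos, where h=h and Jac=Jac and y="x k"] by simp

lemma pred_nonneg: "0 \<le> pred k"
  using pred_ge[of k] mu_hat_pos[of k]
  by (meson order_trans zero_le_mult_iff zero_le_power2 less_imp_le)

lemma reduction_ge_pred:
  assumes "\<not> stops k"
  shows "ups1 * pred k \<le> D k - psi h (x (Suc k))"
proof -
  have "step k \<noteq> 0" using lm_dir_nonzero[OF mu_hat_pos] assms by blast
  then have "0 < \<mu>_hat k * (norm (step k))\<^sup>2" using mu_hat_pos[of k] by simp
  then have "0 < pred k" using pred_ge[of k] by linarith
  moreover have "ups1 \<le> (D k - psi h (x (Suc k))) / pred k"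
    using lmtr_step[OF assms] unfolding lm_ratio_def Let_def by (simp add: mult.assoc)
  ultimately show ?thesis by (simp add: field_simps)
qed

lemma psi_Suc_le_D:
  assumes "\<not> stops k"
  shows "psi h (x (Suc k)) \<le> D k"
  using reduction_ge_pred[OF assms] mult_nonneg_nonneg[OF less_imp_le[OF ups1(1)] pred_nonneg[of k]]
  by linarith

lemma D_Suc_eq:
  assumes "\<not> stops k"
  shows "D (Suc k) = (1 - th k) * psi h (x (Suc k)) + th k * D k"
  using lmtr_step[OF assms] by blast

lemma psi_le_D: "psi h (x k) \<le> D k"
proof (induction k)
  case 0
  then show ?case by (simp add: lmtr_init)
next
  case (Suc k)
  show ?case
  proof (cases "stops k")
    case True
    then show ?thesis using Suc lmtr_stop by simp
  next
    case False
    have "th k * psi h (x (Suc k)) \<le> th k * D k"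
      using psi_Suc_le_D[OF False] th(1)[of k] by (rule mult_left_mono)
    then show ?thesis unfolding D_Suc_eq[OF False] by (simp add: algebra_simps)
  qed
qed

lemma D_nonneg: "0 \<le> D k"
  using psi_le_D[of k] psi_nonneg[of h "x k"] by linarith

lemma D_decrease:
  assumes "\<not> stops k"
  shows "(1 - thmax) * (D k - psi h (x (Suc k))) \<le> D k - D (Suc k)"
proof -
  have "D k - D (Suc k) = (1 - th k) * (D k - psi h (x (Suc k)))"
    unfolding D_Suc_eq[OF assms] by (simp add: algebra_simps)
  then show ?thesis
    using psi_Suc_le_D[OF assms] th(2)[of k] by (simp add: mult_right_mono)
qed

lemma D_antimono: "D (Suc k) \<le> D k"
proof (cases "stops k")
  case False
  have "0 \<le> (1 - thmax) * (D k - psi h (x (Suc k)))"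
    using psi_Suc_le_D[OF False] th(3) by simp
  then show ?thesis using D_decrease[OF False] by linarith
qed (simp add: lmtr_stop)

lemma stops_imp_at_limit:
  assumes "stops k" "k \<le> j"
  shows "x j = xs"
proof -
  have const: "x j = x k" if "k \<le> j" for j
    using that
  proof (induction j rule: dec_induct)
    case (step j)
    then have "stops j" using assms(1) by (simp only: step.IH)
    then have "x (Suc j) = x j" by (rule lmtr_stop(1))
    then show ?case using step.IH by simp
  qed simp
  have "(\<lambda>j. x (j + k)) \<longlonglongrightarrow> xs" using convergent by (rule LIMSEQ_ignore_initial_segment)
  moreover have "(\<lambda>j. x (j + k)) = (\<lambda>j. x k)" by (intro ext const) simp
  ultimately have "(\<lambda>j. x k) \<longlonglongrightarrow> xs" by simp
  then have "x k = xs" by (rule LIMSEQ_const_iff[THEN iffD1])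
  with const[OF assms(2)] show ?thesis by simp
qed

lemma lam_pos: "0 < lam k"
proof (induction k)
  case (Suc k)
  show ?case
  proof (cases "stops k")
    case False
    then have "lam (Suc k) =
        (if ups2 \<le> ratio k (p k) then rho2 * rho1 ^ p k * lam k else rho1 ^ p k * lam k)"
      using lmtr_step by blast
    then show ?thesis using Suc rho by simp
  qed (use Suc lmtr_stop(2) in simp)
qed (simp add: lmtr_init)

lemma mu_nonneg: "0 \<le> \<mu> k"
  using xi(1)[of k] om(1)[of k] by (simp add: lm_mu_def)

lemma h_tendsto_zero: "(\<lambda>k. h (x k)) \<longlonglongrightarrow> 0"
  using isCont_tendsto_compose[OF has_derivative_continuous[OF deriv] convergent] solution by simp

lemma psi_tendsto_zero: "(\<lambda>k. psi h (x k)) \<longlonglongrightarrow> 0"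
  using tendsto_divide[OF tendsto_power[OF tendsto_norm[OF h_tendsto_zero], of 2] tendsto_const, of 2]
  by (simp add: psi_def)

lemma infdist_tendsto_zero: "(\<lambda>k. infdist (x k) \<Omega>) \<longlonglongrightarrow> 0"
  using tendsto_infdist[OF convergent, of \<Omega>] solution by simp

lemma eventually_norm_Jac_le: "\<forall>\<^sub>F k in sequentially. norm (Jac (x k)) \<le> norm (Jac xs) + 1"
proof -
  have "(\<lambda>k. norm (Jac (x k))) \<longlonglongrightarrow> norm (Jac xs)"
    using tendsto_norm[OF isCont_tendsto_compose[OF Jac_continuous convergent]] .
  then have "\<forall>\<^sub>F k in sequentially. norm (Jac (x k)) < norm (Jac xs) + 1"
    by (rule order_tendstoD) simp
  then show ?thesis by (rule eventually_mono) simp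
qed

abbreviation "C_J \<equiv> real CARD('m) * real CARD('n) * (norm (Jac xs) + 1)"

lemma eventually_Jac_bounded:
  "\<forall>\<^sub>F k in sequentially. (\<forall>v. norm (Jac (x k) *v v) \<le> C_J * norm v) \<and>
     (\<forall>w. norm (transpose (Jac (x k)) *v w) \<le> C_J * norm w)"
proof (rule eventually_mono[OF eventually_norm_Jac_le], intro allI conjI)
  fix k v w assume "norm (Jac (x k)) \<le> norm (Jac xs) + 1"
  then have entries: "\<bar>Jac (x k) $ i $ j\<bar> \<le> norm (Jac xs) + 1" for i j
    using matrix_entry_le_norm[of "Jac (x k)" i j] by linarith
  show "norm (Jac (x k) *v v) \<le> C_J * norm v"
    using norm_matrix_vector_mult_le[OF entries, of v] by (simp only: mult.commute[of "real CARD('n)"])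
  show "norm (transpose (Jac (x k)) *v w) \<le> C_J * norm w"
    using entries by (intro norm_matrix_vector_mult_le) (simp add: transpose_def)
qed

lemma grad_tendsto_zero: "(\<lambda>k. grad k) \<longlonglongrightarrow> 0"
proof (rule Lim_null_comparison)
  show "\<forall>\<^sub>F k in sequentially. norm (grad k) \<le> C_J * norm (h (x k))"
    using eventually_Jac_bounded by (rule eventually_mono) (simp add: grad_psi_def)
  show "(\<lambda>k. C_J * norm (h (x k))) \<longlonglongrightarrow> 0"
    using tendsto_mult_right_zero[OF tendsto_norm_zero[OF h_tendsto_zero]] by simp
qed

lemma mu_tendsto_zero: "(\<lambda>k. \<mu> k) \<longlonglongrightarrow> 0"
proof (rule Lim_null_comparison)
  show "\<forall>\<^sub>F k in sequentially.
      norm (\<mu> k) \<le> ximax * norm (h (x k)) powr eta + ommax * norm (grad k) powr eta"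
  proof (intro always_eventually allI)
    fix k
    have "\<mu> k \<le> ximax * norm (h (x k)) powr eta + ommax * norm (grad k) powr eta"
      unfolding lm_mu_def using xi(2)[of k] om(2)[of k] by (intro add_mono mult_right_mono) auto
    then show "norm (\<mu> k) \<le> ximax * norm (h (x k)) powr eta + ommax * norm (grad k) powr eta"
      using mu_nonneg[of k] by simp
  qed
  have "(\<lambda>k. norm (h (x k)) powr eta) \<longlonglongrightarrow> 0"
    by (rule tendsto_zero_powrI[OF tendsto_norm_zero[OF h_tendsto_zero] tendsto_const]) (use eta in auto)
  moreover have "(\<lambda>k. norm (grad k) powr eta) \<longlonglongrightarrow> 0"
    by (rule tendsto_zero_powrI[OF tendsto_norm_zero[OF grad_tendsto_zero] tendsto_const]) (use eta in auto)
  ultimately show "(\<lambda>k. ximax * norm (h (x k)) powr eta + ommax * norm (grad k) powr eta) \<longlonglongrightarrow> 0"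
    using tendsto_add[OF tendsto_mult_right_zero tendsto_mult_right_zero] by (simp add: mult.commute)
qed

lemma eventually_no_backtracking: "\<forall>\<^sub>F k in sequentially. \<not> stops k \<longrightarrow> p k = 0"
proof -
  let ?err = "\<lambda>k. norm (h (x k)) * L + L\<^sup>2 / 2 * (norm (grad k) / mumin)\<^sup>2"
  have "?err \<longlonglongrightarrow> 0 * L + L\<^sup>2 / 2 * (0 / mumin)\<^sup>2"
    using mumin
    by (intro tendsto_intros tendsto_norm_zero[OF h_tendsto_zero]
        tendsto_norm_zero[OF grad_tendsto_zero]) auto
  then have "?err \<longlonglongrightarrow> 0" by simp
  then have "\<forall>\<^sub>F k in sequentially. ?err k < (1 - ups1) * mumin"
    by (rule order_tendstoD(2)) (use ups1 mumin in simp)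
  then show ?thesis
  proof (rule eventually_mono, intro impI)
    fix k assume small: "?err k < (1 - ups1) * mumin" and "\<not> stops k"
    have "ups1 \<le> ratio k 0"
      using small \<open>\<not> stops k\<close> ups1(2)
      by (intro lm_ratio_ge[OF deriv Jac_lipschitz mumin _ _ psi_le_D]) auto
    then show "p k = 0" using lmtr_step[OF \<open>\<not> stops k\<close>] by (meson not_gr0 not_less)
  qed
qed

lemma eventually_first_trial_accepted:
  "\<exists>K. \<forall>k\<ge>K. \<not> stops k \<longrightarrow>
     p k = 0 \<and> x (Suc k) = x k + lm_dir h Jac (x k) (max mumin (lam k * \<mu> k))"
proof -
  obtain K where K: "\<And>k. K \<le> k \<Longrightarrow> \<not> stops k \<longrightarrow> p k = 0"
    using eventually_no_backtracking unfolding eventually_sequentially by blast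
  have "p k = 0 \<and> x (Suc k) = x k + lm_dir h Jac (x k) (max mumin (lam k * \<mu> k))"
    if "K \<le> k" "\<not> stops k" for k
  proof -
    have "p k = 0" using K that by blast
    then show ?thesis using lmtr_step[OF that(2)] by simp
  qed
  then show ?thesis by blast
qed

lemma eventually_lam_antimono: "\<forall>\<^sub>F k in sequentially. lam (Suc k) \<le> lam k"
proof (rule eventually_mono[OF eventually_no_backtracking])
  fix k assume no_backtracking: "\<not> stops k \<longrightarrow> p k = 0"
  show "lam (Suc k) \<le> lam k"
  proof (cases "stops k")
    case False
    then have "lam (Suc k) = (if ups2 \<le> ratio k 0 then rho2 * lam k else lam k)"
      using lmtr_step no_backtracking by simp
    then show ?thesis using lam_pos[of k] rho by (simp add: mult_left_le_one_le)
  qed (simp add: lmtr_stop)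
qed

lemma eventually_mu_hat_le: "\<exists>M>0. \<forall>\<^sub>F k in sequentially. \<not> stops k \<longrightarrow> \<mu>_hat k \<le> M"
proof -
  have "\<forall>\<^sub>F k in sequentially. \<mu> k < 1" using mu_tendsto_zero by (rule order_tendstoD) simp
  with eventually_lam_antimono eventually_no_backtracking
  have "\<forall>\<^sub>F k in sequentially. lam (Suc k) \<le> lam k \<and> (\<not> stops k \<longrightarrow> p k = 0) \<and> \<mu> k < 1"
    by eventually_elim blast
  then obtain K where K: "\<And>k. K \<le> k \<Longrightarrow> lam (Suc k) \<le> lam k \<and> (\<not> stops k \<longrightarrow> p k = 0) \<and> \<mu> k < 1"
    unfolding eventually_sequentially by blast
  have "\<not> stops k \<longrightarrow> \<mu>_hat k \<le> max mumin (lam K)" if "K \<le> k" for k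
  proof
    assume "\<not> stops k"
    have "lam k \<le> lam K"
      by (rule lift_Suc_antimono_le_ivl[of "{K..}" lam]) (use K that in auto)
    moreover have "lam k * \<mu> k \<le> lam k"
      using K[OF that] lam_pos[of k] mu_nonneg[of k] by (simp add: mult_left_le)
    ultimately show "\<mu>_hat k \<le> max mumin (lam K)" using K[OF that] \<open>\<not> stops k\<close> by simp
  qed
  moreover have "0 < max mumin (lam K)" using mumin by simp
  ultimately show ?thesis unfolding eventually_sequentially by blast
qed

lemma grad_eq_lm_system:
  "grad k = - (transpose (Jac (x k)) *v (Jac (x k) *v step k) + \<mu>_hat k *\<^sub>R step k)"
  using lm_dir_eq[OF mu_hat_pos, where h=h and Jac=Jac and y="x k"] by simp

lemma eventually_grad_le_step:
  "\<exists>Q>0. \<forall>\<^sub>F k in sequentially. \<not> stops k \<longrightarrow> norm (grad k) \<le> Q * norm (step k)"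
proof -
  obtain M where "0 < M" and M: "\<forall>\<^sub>F k in sequentially. \<not> stops k \<longrightarrow> \<mu>_hat k \<le> M"
    using eventually_mu_hat_le by blast
  have "0 < C_J" by (simp add: add_nonneg_pos)
  from M eventually_Jac_bounded
  have "\<forall>\<^sub>F k in sequentially. \<not> stops k \<longrightarrow> norm (grad k) \<le> (C_J * C_J + M) * norm (step k)"
  proof eventually_elim
    case (elim k)
    let ?J = "Jac (x k)" and ?d = "step k"
    have "norm (transpose ?J *v (?J *v ?d)) \<le> C_J * norm (?J *v ?d)" using elim(2) by blast
    also have "\<dots> \<le> C_J * (C_J * norm ?d)" using elim(2) \<open>0 < C_J\<close> by (simp add: mult_left_mono)
    finally have JJ: "norm (transpose ?J *v (?J *v ?d)) \<le> C_J * C_J * norm ?d" by (simp add: mult.assoc)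
    show ?case
    proof
      assume "\<not> stops k"
      have "norm (grad k) \<le> norm (transpose ?J *v (?J *v ?d)) + norm (\<mu>_hat k *\<^sub>R ?d)"
        unfolding grad_eq_lm_system[of k] norm_minus_cancel by (rule norm_triangle_ineq)
      also have "\<dots> \<le> C_J * C_J * norm ?d + M * norm ?d"
      proof (rule add_mono[OF JJ])
        have "\<mu>_hat k \<le> M" using elim(1) \<open>\<not> stops k\<close> by blast
        then show "norm (\<mu>_hat k *\<^sub>R ?d) \<le> M * norm ?d"
          using mu_hat_pos[of k] by (simp add: mult_right_mono)
      qed
      finally show "norm (grad k) \<le> (C_J * C_J + M) * norm ?d" by (simp add: algebra_simps)
    qed
  qed
  moreover have "0 < C_J * C_J + M" using \<open>0 < C_J\<close> \<open>0 < M\<close> by (simp add: add_pos_pos)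
  ultimately show ?thesis by blast
qed

lemma eventually_reduction_ge_grad:
  "\<exists>c>0. \<forall>\<^sub>F k in sequentially. \<not> stops k \<longrightarrow> c * (norm (grad k))\<^sup>2 \<le> D k - psi h (x (Suc k))"
proof -
  obtain Q where "0 < Q" and Q: "\<forall>\<^sub>F k in sequentially. \<not> stops k \<longrightarrow> norm (grad k) \<le> Q * norm (step k)"
    using eventually_grad_le_step by blast
  have "\<forall>\<^sub>F k in sequentially. \<not> stops k \<longrightarrow>
      ups1 * (mumin / Q\<^sup>2) * (norm (grad k))\<^sup>2 \<le> D k - psi h (x (Suc k))"
  proof (rule eventually_mono[OF Q], intro impI)
    fix k assume "\<not> stops k \<longrightarrow> norm (grad k) \<le> Q * norm (step k)" and "\<not> stops k"
    then have "(norm (grad k))\<^sup>2 \<le> (Q * norm (step k))\<^sup>2" by (simp add: power_mono)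
    then have "mumin / Q\<^sup>2 * (norm (grad k))\<^sup>2 \<le> mumin / Q\<^sup>2 * (Q * norm (step k))\<^sup>2"
      by (rule mult_left_mono) (use mumin in simp)
    also have "\<dots> = mumin * (norm (step k))\<^sup>2" using \<open>0 < Q\<close> by (simp add: power_mult_distrib)
    also have "\<dots> \<le> \<mu>_hat k * (norm (step k))\<^sup>2" by (simp add: mult_right_mono)
    also have "\<dots> \<le> pred k" by (rule pred_ge)
    finally have "ups1 * (mumin / Q\<^sup>2 * (norm (grad k))\<^sup>2) \<le> ups1 * pred k"
      by (rule mult_left_mono) (use ups1 in simp)
    also have "\<dots> \<le> D k - psi h (x (Suc k))" by (rule reduction_ge_pred[OF \<open>\<not> stops k\<close>])
    finally show "ups1 * (mumin / Q\<^sup>2) * (norm (grad k))\<^sup>2 \<le> D k - psi h (x (Suc k))"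
      by (simp add: mult.assoc)
  qed
  moreover have "0 < ups1 * (mumin / Q\<^sup>2)" using ups1(1) mumin \<open>0 < Q\<close> by simp
  ultimately show ?thesis by blast
qed

lemma eventually_reduction_ge_psi_powr:
  assumes "0 < \<kappa>"
    and lojasiewicz: "\<forall>\<^sub>F k in sequentially. psi h (x k) powr a \<le> \<kappa> * norm (grad k)"
  shows "\<exists>c>0. \<forall>\<^sub>F k in sequentially.
    \<not> stops k \<longrightarrow> c * psi h (x k) powr (2 * a) \<le> D k - psi h (x (Suc k))"
proof -
  obtain c where "0 < c" and reduction: "\<forall>\<^sub>F k in sequentially.
      \<not> stops k \<longrightarrow> c * (norm (grad k))\<^sup>2 \<le> D k - psi h (x (Suc k))"
    using eventually_reduction_ge_grad by blast
  from reduction lojasiewicz have "\<forall>\<^sub>F k in sequentially.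
      \<not> stops k \<longrightarrow> c / \<kappa>\<^sup>2 * psi h (x k) powr (2 * a) \<le> D k - psi h (x (Suc k))"
  proof eventually_elim
    case (elim k)
    have "psi h (x k) powr (2 * a) = (psi h (x k) powr a)\<^sup>2"
      by (simp add: power2_eq_square powr_add[symmetric])
    also have "\<dots> \<le> (\<kappa> * norm (grad k))\<^sup>2" using elim(2) by (intro power_mono) simp_all
    finally have "c / \<kappa>\<^sup>2 * psi h (x k) powr (2 * a) \<le> c / \<kappa>\<^sup>2 * (\<kappa> * norm (grad k))\<^sup>2"
      by (rule mult_left_mono) (use \<open>0 < c\<close> in simp)
    also have "\<dots> = c * (norm (grad k))\<^sup>2" using \<open>0 < \<kappa>\<close> by (simp add: power_mult_distrib)
    finally show ?case using elim(1) by (meson order_trans)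
  qed
  moreover have "0 < c / \<kappa>\<^sup>2" using \<open>0 < c\<close> \<open>0 < \<kappa>\<close> by simp
  ultimately show ?thesis by blast
qed

lemma thmax_nonneg: "0 \<le> thmax"
  using th(1)[of 0] th(2)[of 0] by simp

lemma eventually_D_two_step_decrease:
  assumes never_stops: "\<And>k. \<not> stops k" and "1/2 \<le> a" "0 < \<kappa>"
    and lojasiewicz: "\<forall>\<^sub>F k in sequentially. psi h (x k) powr a \<le> \<kappa> * norm (grad k)"
  shows "\<exists>c>0. \<forall>\<^sub>F k in sequentially. D (k + 2) \<le> D k - c * D k powr (2 * a)"
proof -
  obtain c1 where "0 < c1" and "\<forall>\<^sub>F k in sequentially.
      \<not> stops k \<longrightarrow> c1 * psi h (x k) powr (2 * a) \<le> D k - psi h (x (Suc k))"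
    using eventually_reduction_ge_psi_powr[OF \<open>0 < \<kappa>\<close> lojasiewicz] by blast
  then obtain K where K: "\<And>k. K \<le> k \<Longrightarrow> c1 * psi h (x k) powr (2 * a) \<le> D k - psi h (x (Suc k))"
    using never_stops unfolding eventually_sequentially by blast
  define X where "X = max 1 (D 0)"
  define m where "m = min (X powr (1 - 2 * a) / 2) (c1 / 2 powr (2 * a))"
  have "D (k + 2) \<le> D k - (1 - thmax) * m * D k powr (2 * a)" if "K \<le> k" for k
  proof -
    have "(1 - thmax) * (c1 * psi h (x (Suc k)) powr (2 * a))
        \<le> (1 - thmax) * (D (Suc k) - psi h (x (Suc (Suc k))))"
      using K[of "Suc k"] that th(3) by (simp add: mult_left_mono)
    also have "\<dots> \<le> D (Suc k) - D (Suc (Suc k))" by (rule D_decrease[OF never_stops])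
    finally have second_step:
      "(1 - thmax) * (c1 * psi h (x (Suc k)) powr (2 * a)) \<le> D (Suc k) - D (Suc (Suc k))" .
    have "D k \<le> X" using lift_Suc_antimono_le[of D, OF D_antimono, of 0 k] by (simp add: X_def)
    have "D (Suc (Suc k)) \<le> D k - (1 - thmax) * m * D k powr (2 * a)"
      unfolding m_def
    proof (rule nonmonotone_two_step_power_decrease[OF psi_nonneg psi_Suc_le_D[OF never_stops] \<open>D k \<le> X\<close>])
      show "1 \<le> X" by (simp add: X_def)
      show "1 \<le> 2 * a" using \<open>1/2 \<le> a\<close> by simp
    qed (use \<open>0 < c1\<close> thmax_nonneg th(3) D_decrease[OF never_stops] second_step in auto)
    then show ?thesis by (simp add: numeral_2_eq_2)
  qed
  moreover have "0 < (1 - thmax) * m"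
    using th(3) \<open>0 < c1\<close> by (simp add: m_def X_def)
  ultimately show ?thesis unfolding eventually_sequentially by blast
qed

lemma eventually_in_cball:
  assumes "0 < r"
  shows "\<forall>\<^sub>F k in sequentially. x k \<in> cball xs r"
proof -
  have "\<forall>\<^sub>F k in sequentially. dist (x k) xs < r" using convergent assms by (rule tendstoD)
  then show ?thesis by (rule eventually_mono) (simp add: dist_commute)
qed

lemma eventually_psi_zero_if_stops:
  assumes "stops k0"
  shows "\<forall>\<^sub>F k in sequentially. psi h (x k) = 0 \<and> infdist (x k) \<Omega> = 0"
proof -
  have "psi h (x k) = 0 \<and> infdist (x k) \<Omega> = 0" if "k0 \<le> k" for k
    using stops_imp_at_limit[OF assms that] solution by (simp add: psi_def infdist_zero)
  then show ?thesis unfolding eventually_sequentially by blast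
qed

lemma iterates_bounded: "\<exists>r>0. \<forall>k. x k \<in> cball xs r"
proof -
  obtain r where "0 < r" "range x \<subseteq> ball xs r"
    using bounded_subset_ballD[OF convergent_imp_bounded[OF convergent]] by blast
  then show ?thesis using ball_subset_cball by blast
qed

end

section \<open>Rates under the Lojasiewicz inequality\<close>

lemma infdist_le_psi_powr:
  fixes h :: "real^'m \<Rightarrow> real^'n"
  assumes "0 < \<beta>" and "\<beta> * infdist y S \<le> norm (h y) powr \<delta>"
  shows "infdist y S \<le> (2 * psi h y) powr (\<delta> / 2) / \<beta>"
proof -
  have "norm (h y) powr \<delta> = (norm (h y) powr 2) powr (\<delta> / 2)"
    by (simp only: powr_powr) simp
  also have "\<dots> = (2 * psi h y) powr (\<delta> / 2)" by (simp add: psi_def)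
  finally show ?thesis using assms by (simp add: field_simps)
qed

locale lmtr_regular_solution = lmtr_convergent +
  fixes \<theta> \<kappa> r\<theta> \<delta> \<beta> rr :: real
  assumes lojasiewicz: "0 < \<kappa>" "0 < r\<theta>"
      "\<forall>y\<in>cball xs r\<theta>. \<bar>psi h y - psi h xs\<bar> powr \<theta> \<le> \<kappa> * norm (grad_psi h Jac y)"
    and holder: "0 < \<delta>" "0 < \<beta>" "0 < rr"
      "\<forall>y\<in>cball xs rr. \<beta> * infdist y {z. h z = 0} \<le> norm (h y) powr \<delta>"
begin

lemma eventually_lojasiewicz: "\<forall>\<^sub>F k in sequentially. psi h (x k) powr \<theta> \<le> \<kappa> * norm (grad k)"
  using eventually_in_cball[OF lojasiewicz(2)]
  by (rule eventually_mono) (use lojasiewicz(3) solution psi_nonneg in \<open>auto simp: psi_def\<close>)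

lemma eventually_infdist_le_psi:
  "\<forall>\<^sub>F k in sequentially. infdist (x k) \<Omega> \<le> (2 * psi h (x k)) powr (\<delta> / 2) / \<beta>"
  using eventually_in_cball[OF holder(3)]
  by (rule eventually_mono) (use infdist_le_psi_powr holder(2,4) in blast)

lemma finite_termination:
  assumes "\<theta> = 0"
  shows "\<exists>K. \<forall>k\<ge>K. psi h (x k) = 0 \<and> infdist (x k) \<Omega> = 0"
proof -
  have "(\<lambda>k. \<kappa> * norm (grad k)) \<longlonglongrightarrow> \<kappa> * 0"
    by (intro tendsto_mult_left tendsto_norm_zero grad_tendsto_zero)
  then have "\<forall>\<^sub>F k in sequentially. \<kappa> * norm (grad k) < 1" by (rule order_tendstoD) simp
  \<comment> \<open>as \<open>0 powr 0 = 0\<close>, for \<open>\<theta> = 0\<close> the inequality says \<open>psi \<noteq> 0 \<Longrightarrow> 1 \<le> \<kappa> * norm grad\<close>\<close>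
  with eventually_lojasiewicz have "\<forall>\<^sub>F k in sequentially. psi h (x k) = 0"
    by eventually_elim (use assms in \<open>auto split: if_splits\<close>)
  then have "\<forall>\<^sub>F k in sequentially. psi h (x k) = 0 \<and> infdist (x k) \<Omega> = 0"
    by (rule eventually_mono) (simp add: psi_def)
  then show ?thesis unfolding eventually_sequentially by blast
qed

lemma eventually_psi_geometric:
  assumes "0 < \<theta>" "\<theta> \<le> 1/2"
  shows "\<exists>C q. 0 < q \<and> q < 1 \<and> (\<forall>\<^sub>F k in sequentially. psi h (x k) \<le> C * q ^ k)"
proof (cases "\<exists>k0. stops k0")
  case True
  then obtain k0 where "stops k0" by blast
  then have "\<forall>\<^sub>F k in sequentially. psi h (x k) \<le> 0 * (1/2) ^ k"
    by (rule eventually_mono[OF eventually_psi_zero_if_stops]) simp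
  then show ?thesis by (intro exI[of _ 0] exI[of _ "1/2"]) simp
next
  case False
  then have never_stops: "\<And>k. \<not> stops k" by blast
  have "\<forall>\<^sub>F k in sequentially. psi h (x k) < 1" using psi_tendsto_zero by (rule order_tendstoD) simp
  with eventually_lojasiewicz
  have loj_half: "\<forall>\<^sub>F k in sequentially. psi h (x k) powr (1/2) \<le> \<kappa> * norm (grad k)"
  proof eventually_elim
    case (elim k)
    have "psi h (x k) powr (1/2) \<le> psi h (x k) powr \<theta>"
      using assms(2) psi_nonneg elim(2) by (intro powr_mono') auto
    then show ?case using elim(1) by linarith
  qed
  obtain c where "0 < c" and "\<forall>\<^sub>F k in sequentially. D (k + 2) \<le> D k - c * D k powr (2 * (1/2))"
    using eventually_D_two_step_decrease[OF never_stops order_refl lojasiewicz(1) loj_half] by blast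
  then obtain K where K: "\<And>k. K \<le> k \<Longrightarrow> D (k + 2) \<le> D k - c * D k powr (2 * (1/2))"
    unfolding eventually_sequentially by blast
  define q where "q = max (1 - c) (1/2)"
  have "D (k + 2) \<le> q * D k" if "K \<le> k" for k
  proof -
    have "D (k + 2) \<le> (1 - c) * D k" using K[OF that] D_nonneg[of k] by (simp add: algebra_simps)
    also have "\<dots> \<le> q * D k" unfolding q_def by (intro mult_right_mono max.cobounded1 D_nonneg)
    finally show ?thesis .
  qed
  moreover have "0 < q" "q < 1" using \<open>0 < c\<close> by (auto simp: q_def)
  ultimately obtain C r where "0 < r" "r < 1" and "\<forall>\<^sub>F k in sequentially. D k \<le> C * r ^ k"
    using two_step_contraction_geometric[of q K D] by blast
  moreover from this(3) have "\<forall>\<^sub>F k in sequentially. psi h (x k) \<le> C * r ^ k"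
    by (rule eventually_mono) (use psi_le_D order_trans in blast)
  ultimately show ?thesis by blast
qed

lemma linear_rates:
  assumes "0 < \<theta>" "\<theta> \<le> 1/2"
  shows "(\<exists>c1 q1. 0 < c1 \<and> 0 < q1 \<and> q1 < 1 \<and> (\<forall>k. psi h (x k) \<le> c1 * q1 ^ k)) \<and>
    (\<exists>c2 q2. 0 < c2 \<and> 0 < q2 \<and> q2 < 1 \<and> (\<forall>k. infdist (x k) \<Omega> \<le> c2 * q2 ^ k))"
proof
  obtain C q where q: "0 < q" "q < 1" and psi_le: "\<forall>\<^sub>F k in sequentially. psi h (x k) \<le> C * q ^ k"
    using eventually_psi_geometric[OF assms] by blast
  obtain c1 where "0 < c1" "\<forall>k. psi h (x k) \<le> c1 * q ^ k"
    using eventually_geometric_bound_imp_geometric_bound[OF q(1) psi_le] by blast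
  with q show "\<exists>c1 q1. 0 < c1 \<and> 0 < q1 \<and> q1 < 1 \<and> (\<forall>k. psi h (x k) \<le> c1 * q1 ^ k)"
    by blast
  define C2 where "C2 = (2 * max C 0) powr (\<delta> / 2) / \<beta>"
  from eventually_infdist_le_psi psi_le
  have infdist_le: "\<forall>\<^sub>F k in sequentially. infdist (x k) \<Omega> \<le> C2 * (q powr (\<delta> / 2)) ^ k"
  proof eventually_elim
    case (elim k)
    have "C * q ^ k \<le> max C 0 * q ^ k" using q(1) by (intro mult_right_mono) auto
    then have "(2 * psi h (x k)) powr (\<delta> / 2) / \<beta> \<le> (2 * (max C 0 * q ^ k)) powr (\<delta> / 2) / \<beta>"
      using elim(2) holder(1,2) psi_nonneg by (intro divide_right_mono powr_mono2) auto
    also have "\<dots> = C2 * (q powr (\<delta> / 2)) ^ k"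
    proof -
      have "(q ^ k) powr (\<delta> / 2) = (q powr (\<delta> / 2)) ^ k"
        using q(1) by (simp add: powr_realpow[symmetric] powr_powr powr_power mult.commute)
      then show ?thesis using q(1) by (simp add: C2_def powr_mult)
    qed
    finally show ?case using elim(1) by linarith
  qed
  have q2: "0 < q powr (\<delta> / 2)" "q powr (\<delta> / 2) < 1"
    using q holder(1) by (simp_all add: powr01_less_one)
  obtain c2 where "0 < c2" "\<forall>k. infdist (x k) \<Omega> \<le> c2 * (q powr (\<delta> / 2)) ^ k"
    using eventually_geometric_bound_imp_geometric_bound[OF q2(1) infdist_le] by blast
  with q2 show "\<exists>c2 q2. 0 < c2 \<and> 0 < q2 \<and> q2 < 1 \<and> (\<forall>k. infdist (x k) \<Omega> \<le> c2 * q2 ^ k)"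
    by blast
qed

lemma eventually_psi_sublinear:
  assumes "1/2 < \<theta>"
  shows "\<exists>\<sigma>>0. \<forall>\<^sub>F k in sequentially. psi h (x k) \<le> \<sigma> * real k powr (- 1 / (2 * \<theta> - 1))"
proof (cases "\<exists>k0. stops k0")
  case True
  then obtain k0 where "stops k0" by blast
  then have "\<forall>\<^sub>F k in sequentially. psi h (x k) \<le> 1 * real k powr (- 1 / (2 * \<theta> - 1))"
    by (rule eventually_mono[OF eventually_psi_zero_if_stops]) simp
  then show ?thesis by (intro exI[of _ 1]) simp
next
  case False
  then have never_stops: "\<And>k. \<not> stops k" by blast
  define s where "s = 2 * \<theta> - 1"
  have "0 < s" using assms by (simp add: s_def)
  obtain c where "0 < c" and "\<forall>\<^sub>F k in sequentially. D (k + 2) \<le> D k - c * D k powr (2 * \<theta>)"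
    using eventually_D_two_step_decrease[OF never_stops _ lojasiewicz(1) eventually_lojasiewicz] assms
    by auto
  then obtain K where "\<And>k. K \<le> k \<Longrightarrow> D (k + 2) \<le> D k - c * D k powr (1 + s)"
    unfolding eventually_sequentially s_def by auto
  then obtain \<sigma> where "0 < \<sigma>" and "\<forall>\<^sub>F k in sequentially. D k \<le> \<sigma> * real k powr (- 1 / s)"
    using power_decrease_sublinear_rate[of s c D, OF \<open>0 < s\<close> \<open>0 < c\<close> D_nonneg D_antimono] by blast
  moreover from this(2) have "\<forall>\<^sub>F k in sequentially. psi h (x k) \<le> \<sigma> * real k powr (- 1 / s)"
    by (rule eventually_mono) (use psi_le_D order_trans in blast)
  ultimately show ?thesis unfolding s_def by blast
qed

lemma sublinear_rates:
  assumes "1/2 < \<theta>"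
  shows "\<exists>\<sigma>1 \<sigma>2. 0 < \<sigma>1 \<and> 0 < \<sigma>2 \<and> (\<exists>K. \<forall>k\<ge>K.
    psi h (x k) \<le> \<sigma>1 * real k powr (- 1 / (2 * \<theta> - 1)) \<and>
    infdist (x k) \<Omega> \<le> \<sigma>2 * real k powr (- \<delta> / (2 * (2 * \<theta> - 1))))"
proof -
  define s where "s = 2 * \<theta> - 1"
  have "0 < s" using assms by (simp add: s_def)
  obtain \<sigma> where "0 < \<sigma>" and psi_le: "\<forall>\<^sub>F k in sequentially. psi h (x k) \<le> \<sigma> * real k powr (- 1 / s)"
    using eventually_psi_sublinear[OF assms] unfolding s_def by blast
  define \<sigma>2 where "\<sigma>2 = (2 * \<sigma>) powr (\<delta> / 2) / \<beta>"
  from eventually_infdist_le_psi psi_le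
  have "\<forall>\<^sub>F k in sequentially. psi h (x k) \<le> \<sigma> * real k powr (- 1 / s) \<and>
      infdist (x k) \<Omega> \<le> \<sigma>2 * real k powr (- \<delta> / (2 * s))"
  proof eventually_elim
    case (elim k)
    have "(2 * psi h (x k)) powr (\<delta> / 2) / \<beta> \<le> (2 * (\<sigma> * real k powr (- 1 / s))) powr (\<delta> / 2) / \<beta>"
      using elim(2) holder(1,2) psi_nonneg by (intro divide_right_mono powr_mono2) auto
    also have "\<dots> = \<sigma>2 * real k powr (- \<delta> / (2 * s))"
      using \<open>0 < \<sigma>\<close> by (simp add: \<sigma>2_def powr_mult powr_powr mult.commute)
    finally show ?case using elim by linarith
  qed
  moreover have "0 < \<sigma>2" using \<open>0 < \<sigma>\<close> holder(2) by (simp add: \<sigma>2_def)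
  ultimately show ?thesis using \<open>0 < \<sigma>\<close> unfolding eventually_sequentially s_def by blast
qed

end

theorem theorem6:
  fixes h :: "real^'m \<Rightarrow> real^'n" and Jac :: "real^'m \<Rightarrow> real^'m^'n"
    and xs :: "real^'m" and \<delta> \<beta> rr L :: real
    and eta rho1 rho2 ups1 ups2 mumin ximin ximax ommin ommax thmin thmax :: real
    and xi om th :: "nat \<Rightarrow> real"
    and x :: "nat \<Rightarrow> real^'m" and lam D :: "nat \<Rightarrow> real" and p :: "nat \<Rightarrow> nat"
    and \<theta> \<kappa> r\<theta> :: real
  assumes C1_deriv: "\<And>y. (h has_derivative (\<lambda>v. Jac y *v v)) (at y)"
    and C1_cont: "continuous_on UNIV Jac"
    and Omega_ne: "{y. h y = 0} \<noteq> {}"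
    \<comment> \<open>(A1) Hoelder metric subregularity at (x*,0)\<close>
    and A1: "0 < \<delta>" "\<delta> \<le> 1" "0 < \<beta>" "0 < rr" "rr < 1"
      "\<forall>y\<in>cball xs rr. \<beta> * infdist y {z. h z = 0} \<le> norm (h y) powr \<delta>"
    \<comment> \<open>(A2) bounded level set\<close>
    and A2: "bounded {y. psi h y \<le> psi h (x 0)}"
    \<comment> \<open>(A3) Lipschitz Jacobian (operator norm)\<close>
    and A3: "\<forall>y z. onorm (\<lambda>v. (Jac y - Jac z) *v v) \<le> L * norm (y - z)"
    \<comment> \<open>(A4) Lojasiewicz gradient inequality at every critical point of psi\<close>
    and A4: "\<forall>xb. grad_psi h Jac xb = 0 \<longrightarrow>
      (\<exists>\<kappa>' r' \<theta>'. 0 < \<kappa>' \<and> 0 < r' \<and> 0 \<le> \<theta>' \<and> \<theta>' < 1 \<and>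
        (\<forall>y\<in>cball xb r'. \<bar>psi h y - psi h xb\<bar> powr \<theta>' \<le> \<kappa>' * norm (grad_psi h Jac y)))"
    \<comment> \<open>algorithm parameters\<close>
    and par: "0 < eta" "eta < 4 * \<delta>" "0 < rho2" "rho2 < 1" "1 < rho1"
      "0 < ups1" "ups1 < ups2" "ups2 < 1" "0 < mumin"
      "0 \<le> ximin" "ximin \<le> ximax" "0 \<le> ommin" "ommin \<le> ommax" "0 < ximin + ommin"
      "0 \<le> thmin" "thmin \<le> thmax" "thmax < 1"
      "\<forall>k. ximin \<le> xi k \<and> xi k \<le> ximax"
      "\<forall>k. ommin \<le> om k \<and> om k \<le> ommax"
      "\<forall>k. thmin \<le> th k \<and> th k \<le> thmax"
    and gen: "lmtr_seq h Jac eta rho1 rho2 ups1 ups2 mumin xi om th x lam D p"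
    \<comment> \<open>convergence to a solution x*\<close>
    and conv: "x \<longlonglongrightarrow> xs" and sol: "h xs = 0"
    \<comment> \<open>theta is the Lojasiewicz exponent of psi at x*\<close>
    and loj: "0 < \<kappa>" "0 < r\<theta>" "0 \<le> \<theta>" "\<theta> < 1"
      "\<forall>y\<in>cball xs r\<theta>. \<bar>psi h y - psi h xs\<bar> powr \<theta> \<le> \<kappa> * norm (grad_psi h Jac y)"
  shows
    \<comment> \<open>(i)\<close>
    "(\<exists>K. \<forall>k\<ge>K. \<not> (h (x k) = 0 \<or> grad_psi h Jac (x k) = 0) \<longrightarrow>
        p k = 0 \<and>
        x (Suc k) = x k + lm_dir h Jac (x k)
                      (max mumin (lam k * lm_mu h Jac eta (xi k) (om k) (x k))))
     \<comment> \<open>(ii)\<close>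
     \<and> (\<exists>s sb k'. 0 < s \<and> 0 < sb \<and>
          (x k' \<in> cball xs s \<longrightarrow>
             (\<forall>k\<ge>k'. x k \<in> cball xs sb) \<and>
             (\<lambda>k. psi h (x k)) \<longlonglongrightarrow> 0 \<and>
             (\<lambda>k. infdist (x k) {z. h z = 0}) \<longlonglongrightarrow> 0))
     \<comment> \<open>(iii)\<close>
     \<and> (\<theta> = 0 \<longrightarrow>
          (\<exists>K. \<forall>k\<ge>K. psi h (x k) = 0 \<and> infdist (x k) {z. h z = 0} = 0))
     \<comment> \<open>(iv) R-linear convergence\<close>
     \<and> (0 < \<theta> \<and> \<theta> \<le> 1/2 \<longrightarrow>
          (\<exists>c1 q1. 0 < c1 \<and> 0 < q1 \<and> q1 < 1 \<and> (\<forall>k. psi h (x k) \<le> c1 * q1 ^ k)) \<and>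
          (\<exists>c2 q2. 0 < c2 \<and> 0 < q2 \<and> q2 < 1 \<and>
             (\<forall>k. infdist (x k) {z. h z = 0} \<le> c2 * q2 ^ k)))
     \<comment> \<open>(v)\<close>
     \<and> (1/2 < \<theta> \<and> \<theta> < 1 \<longrightarrow>
          (\<exists>\<sigma>1 \<sigma>2. 0 < \<sigma>1 \<and> 0 < \<sigma>2 \<and>
             (\<exists>K. \<forall>k\<ge>K.
                psi h (x k) \<le> \<sigma>1 * real k powr (- 1 / (2 * \<theta> - 1)) \<and>
                infdist (x k) {z. h z = 0} \<le> \<sigma>2 * real k powr (- \<delta> / (2 * (2 * \<theta> - 1))))))"
proof -
  \<comment> \<open>(A2), (A4), \<open>eta < 4 * \<delta>\<close> and \<open>\<Omega> \<noteq> {}\<close> only serve to establish the convergence,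
    which is assumed here.\<close>
  have "isCont Jac xs" using C1_cont by (simp add: continuous_on_eq_continuous_at)
  moreover have "0 \<le> xi k" "0 \<le> om k" "0 \<le> th k" for k
    using par(10,12,15,18-20) by (meson order_trans)+
  ultimately interpret lmtr_regular_solution h Jac L eta rho1 rho2 ups1 ups2 mumin ximax ommax thmax
      xi om th x lam D p xs \<theta> \<kappa> r\<theta> \<delta> \<beta> rr
    by unfold_locales (use assms in simp_all)
  obtain sb where "0 < sb" "\<forall>k. x k \<in> cball xs sb" using iterates_bounded by blast
  then have part_ii: "\<exists>s sb k'. 0 < s \<and> 0 < sb \<and> (x k' \<in> cball xs s \<longrightarrow>
      (\<forall>k\<ge>k'. x k \<in> cball xs sb) \<and> (\<lambda>k. psi h (x k)) \<longlonglongrightarrow> 0 \<and> (\<lambda>k. infdist (x k) \<Omega>) \<longlonglongrightarrow> 0)"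
    using psi_tendsto_zero infdist_tendsto_zero by (intro exI[of _ 1] exI[of _ sb] exI[of _ 0]) simp
  show ?thesis
    using eventually_first_trial_accepted part_ii finite_termination linear_rates sublinear_rates
    by blast
qed

end
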